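(* For all integers $p\ge 1$, $$E\,|C(p;\mathbf U_1)-C(p-1;\mathbf U_1)|\le 2.$$
   Context: Let $U_1,U_2,\ldots$ be i.i.d. uniform random variables on $[0,1]$ and $\mathbf U_k=(U_k,U_{k+1},\ldots)$ for $k\ge1$. Define $C(n;\mathbf U_k)$ for integers $n\ge0$ and $k\ge1$ recursively by $C(0;\mathbf U_k)=0$ and $C(n;\mathbf U_k)=n-1+C(\lfloor nU_k\rfloor;\mathbf U_{k+1})$ for $n\ge1$. (This is the number of comparisons made by Quickselect to find the minimum of $n$ distinct numbers.) *)

theory Defs
  imports "HOL-Probability.Probability"
begin

text \<open>Sample space: sequences u :: nat => real, u i playing the role of U_(i+1),
  with i.i.d. uniform [0,1] coordinates (infinite product measure).\<close>

definition U_space :: "(nat \<Rightarrow> real) measure" where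
  "U_space = PiM UNIV (\<lambda>_. uniform_measure lborel {0..1::real})"

text \<open>The recursive argument is
  nat (floor (n * u 0)), which is < n whenever u 0 is in [0,1); the guard
  min (n-1) only affects the null event u 0 >= 1 (where the paper's recursion
  is not well founded anyway).\<close>

fun C :: "nat \<Rightarrow> (nat \<Rightarrow> real) \<Rightarrow> nat" where
  "C 0 u = 0"
| "C (Suc m) u = m + C (min m (nat \<lfloor>real (Suc m) * u 0\<rfloor>)) (\<lambda>k. u (Suc k))"

end

theory Submission
  imports Defs
begin

text \<open>Condition on the first pivot U = s. Both C(m+1) and C(m) spend their first step and then
  recurse on the same tail of the sequence, with sizes \<lfloor>(m+1)s\<rfloor> and \<lfloor>ms\<rfloor>; these agree (and the
  increment is exactly 1) unless s lies in the union of the intervals [j/(m+1), j/m], whose total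
  length is at most 1/2. On that set the increment is 1 plus the increment of the recursive call,
  whose mean is at most 2 by induction, so the mean increment is at most 1 + 2 \<cdot> 1/2 = 2.\<close>

definition pivot_rank :: "nat \<Rightarrow> real \<Rightarrow> nat" where
  "pivot_rank m s = min m (nat \<lfloor>real (Suc m) * s\<rfloor>)"

definition jump_set :: "nat \<Rightarrow> real set" where
  "jump_set m = (\<Union>j\<in>{1..m}. {real j / real (Suc m) .. real j / real m})"

lemma C_Suc_case_nat: "C (Suc m) (case_nat s w) = m + C (pivot_rank m s) w"
  by (simp add: pivot_rank_def del: of_nat_Suc)

lemma floor_add_unit_cases:
  fixes x s :: real
  assumes "0 \<le> s" "s < 1"
  shows "\<lfloor>x + s\<rfloor> = \<lfloor>x\<rfloor> \<or> \<lfloor>x + s\<rfloor> = \<lfloor>x\<rfloor> + 1"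
  using assms by (simp add: floor_add floor_eq_iff)

lemma pivot_rank_Suc_cases:
  assumes "0 \<le> s" "s \<le> 1"
  shows "pivot_rank (Suc m) s = pivot_rank m s
      \<or> pivot_rank (Suc m) s = Suc (pivot_rank m s) \<and> s \<in> jump_set (Suc m)"
proof (cases "s = 1")
  case True
  have "real (Suc m) / real (Suc (Suc m)) \<le> 1" by simp
  then have "1 \<in> jump_set (Suc m)" unfolding jump_set_def by force
  with True show ?thesis by (simp add: pivot_rank_def del: of_nat_Suc)
next
  case False
  then have "s < 1" using assms by simp
  define A where "A = nat \<lfloor>real (Suc (Suc m)) * s\<rfloor>"
  define B where "B = nat \<lfloor>real (Suc m) * s\<rfloor>"
  have "\<lfloor>real (Suc (Suc m)) * s\<rfloor> = \<lfloor>real (Suc m) * s + s\<rfloor>"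
    by (simp add: algebra_simps)
  then have AB: "A = B \<or> A = Suc B"
    using floor_add_unit_cases[OF \<open>0 \<le> s\<close> \<open>s < 1\<close>, of "real (Suc m) * s"] assms
    unfolding A_def B_def by (auto simp: nat_add_distrib)
  have "real (Suc (Suc m)) * s < real (Suc (Suc m))"
    using \<open>s < 1\<close> by simp
  then have "A \<le> Suc m" unfolding A_def by linarith
  have "real (Suc m) * s < real (Suc m)"
    using \<open>s < 1\<close> by simp
  then have "B \<le> m" unfolding B_def by linarith
  have ranks: "pivot_rank (Suc m) s = A" "pivot_rank m s = B"
    using \<open>A \<le> Suc m\<close> \<open>B \<le> m\<close> unfolding pivot_rank_def A_def B_def by simp_all
  have "s \<in> jump_set (Suc m)" if "A = Suc B"
  proof -
    have "real A \<le> real (Suc (Suc m)) * s"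
      unfolding A_def using assms by (intro of_nat_floor) simp
    moreover have "real (Suc m) * s < real A"
      unfolding that B_def using assms by (simp add: of_nat_nat) linarith
    ultimately have "real A / real (Suc (Suc m)) \<le> s" "s \<le> real A / real (Suc m)"
      by (simp_all add: field_simps del: of_nat_Suc)
    with that \<open>A \<le> Suc m\<close> show ?thesis unfolding jump_set_def by force
  qed
  with AB ranks show ?thesis by auto
qed

definition C_increment :: "nat \<Rightarrow> (nat \<Rightarrow> real) \<Rightarrow> real" where
  "C_increment n u = \<bar>real (C n u) - real (C (n - 1) u)\<bar>"

lemma C_increment_nonneg: "0 \<le> C_increment n u"
  by (simp add: C_increment_def)

lemma C_increment_Suc_le:
  assumes "0 \<le> s" "s \<le> 1"
  shows "C_increment (Suc m) (case_nat s w)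
    \<le> 1 + indicator (jump_set m) s * C_increment (pivot_rank m s) w"
proof (cases m)
  case 0
  then show ?thesis by (simp add: C_increment_def)
next
  case (Suc k)
  have nonneg: "0 \<le> indicator (jump_set m) s * C_increment (pivot_rank m s) w"
    by (simp add: C_increment_nonneg)
  from pivot_rank_Suc_cases[OF assms, of k] show ?thesis
  proof (elim disjE conjE)
    assume "pivot_rank (Suc k) s = pivot_rank k s"
    then have "C_increment (Suc m) (case_nat s w) = 1"
      using Suc by (simp add: C_increment_def C_Suc_case_nat del: C.simps)
    with nonneg show ?thesis by simp
  next
    assume "pivot_rank (Suc k) s = Suc (pivot_rank k s)" "s \<in> jump_set (Suc k)"
    then show ?thesis
      using Suc by (simp add: C_increment_def C_Suc_case_nat del: C.simps)
  qed
qed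

abbreviation unit_uniform :: "real measure" where
  "unit_uniform \<equiv> uniform_measure lborel {0..1}"

lemma sum_jump_set_lengths: "(\<Sum>j\<in>{1..m}. real j / real m - real j / real (Suc m)) \<le> 1 / 2"
proof (cases "m = 0")
  case False
  have "(\<Sum>j\<in>{1..m}. real j / real m - real j / real (Suc m))
      = (\<Sum>j\<in>{1..m}. real j) / (real m * real (Suc m))"
  proof -
    have "real j / real m - real j / real (Suc m) = real j / (real m * real (Suc m))" for j
      using False by (simp add: field_simps del: of_nat_Suc) (simp add: algebra_simps)
    then show ?thesis by (simp add: sum_divide_distrib del: of_nat_Suc)
  qed
  also have "(\<Sum>j\<in>{1..m}. real j) = real m * real (Suc m) / 2"
    by (induction m) (simp_all add: field_simps)
  finally show ?thesis using False by simp
qed simp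

lemma emeasure_jump_set_le: "emeasure unit_uniform (jump_set m) \<le> ennreal (1 / 2)"
proof -
  have "emeasure unit_uniform (jump_set m)
      \<le> (\<Sum>j\<in>{1..m}. emeasure unit_uniform {real j / real (Suc m) .. real j / real m})"
    unfolding jump_set_def by (rule emeasure_subadditive_finite) auto
  also have "\<dots> = (\<Sum>j\<in>{1..m}. ennreal (real j / real m - real j / real (Suc m)))"
  proof (rule sum.cong[OF refl])
    fix j assume j: "j \<in> {1..m}"
    then have "{real j / real (Suc m) .. real j / real m} \<subseteq> {0..1}" by auto
    moreover have "real j / real (Suc m) \<le> real j / real m"
      using j by (intro divide_left_mono) auto
    ultimately show "emeasure unit_uniform {real j / real (Suc m) .. real j / real m}
        = ennreal (real j / real m - real j / real (Suc m))"
      by (simp add: Int_absorb2 divide_ennreal_def)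
  qed
  also have "\<dots> = ennreal (\<Sum>j\<in>{1..m}. real j / real m - real j / real (Suc m))"
    by (rule sum_ennreal) (auto intro!: divide_left_mono)
  also have "\<dots> \<le> ennreal (1 / 2)"
    by (rule ennreal_leI) (rule sum_jump_set_lengths)
  finally show ?thesis .
qed

lemma (in prob_space) nn_integral_PiM_case_nat:
  assumes [measurable]: "f \<in> borel_measurable (PiM UNIV (\<lambda>_::nat. M))"
  shows "(\<integral>\<^sup>+u. f u \<partial>PiM UNIV (\<lambda>_::nat. M))
    = (\<integral>\<^sup>+s. \<integral>\<^sup>+w. f (case_nat s w) \<partial>PiM UNIV (\<lambda>_::nat. M) \<partial>M)"
proof -
  interpret S: sequence_space M ..
  interpret P: pair_sigma_finite M S.S ..
  have "(\<integral>\<^sup>+u. f u \<partial>S.S) = (\<integral>\<^sup>+x. f ((\<lambda>(s, w). case_nat s w) x) \<partial>(M \<Otimes>\<^sub>M S.S))"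
    by (subst S.PiM_iter[symmetric]) (simp add: nn_integral_distr)
  also have "\<dots> = (\<integral>\<^sup>+s. \<integral>\<^sup>+w. f ((\<lambda>(s, w). case_nat s w) (s, w)) \<partial>S.S \<partial>M)"
    by (subst S.nn_integral_fst) simp_all
  finally show ?thesis by simp
qed

lemma prob_space_U_space: "prob_space U_space"
  unfolding U_space_def by (intro prob_space_PiM prob_space_uniform_measure) auto

lemma nn_integral_U_space_case_nat:
  assumes "f \<in> borel_measurable U_space"
  shows "(\<integral>\<^sup>+u. f u \<partial>U_space) = (\<integral>\<^sup>+s. \<integral>\<^sup>+w. f (case_nat s w) \<partial>U_space \<partial>unit_uniform)"
  using prob_space.nn_integral_PiM_case_nat[of unit_uniform f] assms
  unfolding U_space_def by (simp add: prob_space_uniform_measure)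

lemma measurable_C: "(\<lambda>u. C n u) \<in> measurable U_space (count_space UNIV)"
proof (induction n rule: less_induct)
  case (less n)
  show ?case
  proof (cases n)
    case (Suc m)
    have shift: "(\<lambda>u k. u (Suc k)) \<in> measurable U_space U_space"
      unfolding U_space_def
      by (rule measurable_PiM_single'[where f="\<lambda>k u. u (Suc k)"]) (auto simp: space_PiM)
    have "(\<lambda>u. C (min m i) (\<lambda>k. u (Suc k))) \<in> measurable U_space (count_space UNIV)" for i
      using measurable_compose[OF shift less[of "min m i"]] Suc by simp
    moreover have "(\<lambda>u. nat \<lfloor>real (Suc m) * u 0\<rfloor>) \<in> measurable U_space (count_space UNIV)"
      unfolding U_space_def by measurable
    ultimately have "(\<lambda>u. C (min m (nat \<lfloor>real (Suc m) * u 0\<rfloor>)) (\<lambda>k. u (Suc k)))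
        \<in> measurable U_space (count_space UNIV)"
      by (rule measurable_compose_countable)
    then show ?thesis using Suc by simp
  qed simp
qed

lemma borel_measurable_C_increment[measurable]: "C_increment n \<in> borel_measurable U_space"
proof -
  have [measurable]: "(\<lambda>u. real (C k u)) \<in> borel_measurable U_space" for k
    by (rule measurable_compose[OF measurable_C]) auto
  show ?thesis unfolding C_increment_def by measurable
qed

lemma nn_integral_C_increment_Suc_le:
  assumes IH: "\<And>k. k \<le> m \<Longrightarrow> (\<integral>\<^sup>+u. C_increment k u \<partial>U_space) \<le> c"
  shows "(\<integral>\<^sup>+u. C_increment (Suc m) u \<partial>U_space) \<le> 1 + c * emeasure unit_uniform (jump_set m)"
proof -
  interpret U: prob_space U_space by (rule prob_space_U_space)
  have [measurable]: "jump_set m \<in> sets borel"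
    unfolding jump_set_def by measurable
  have "(\<integral>\<^sup>+u. C_increment (Suc m) u \<partial>U_space)
      = (\<integral>\<^sup>+s. \<integral>\<^sup>+w. C_increment (Suc m) (case_nat s w) \<partial>U_space \<partial>unit_uniform)"
    by (rule nn_integral_U_space_case_nat) measurable
  also have "\<dots> \<le> (\<integral>\<^sup>+s. \<integral>\<^sup>+w. 1 + indicator (jump_set m) s * ennreal (C_increment (pivot_rank m s) w)
      \<partial>U_space \<partial>unit_uniform)"
  proof (rule nn_integral_mono_AE)
    have "AE s in unit_uniform. s \<in> {0..1}" by (rule AE_uniform_measureI) auto
    then show "AE s in unit_uniform. (\<integral>\<^sup>+w. C_increment (Suc m) (case_nat s w) \<partial>U_space)
        \<le> (\<integral>\<^sup>+w. 1 + indicator (jump_set m) s * ennreal (C_increment (pivot_rank m s) w) \<partial>U_space)"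
    proof eventually_elim
      case (elim s)
      have "ennreal (C_increment (Suc m) (case_nat s w))
          \<le> 1 + indicator (jump_set m) s * ennreal (C_increment (pivot_rank m s) w)" for w
        using ennreal_leI[OF C_increment_Suc_le[of s m w]] elim
        by (cases "s \<in> jump_set m") (simp_all add: C_increment_nonneg)
      then show ?case by (rule nn_integral_mono)
    qed
  qed
  also have "\<dots> = (\<integral>\<^sup>+s. 1 + indicator (jump_set m) s * (\<integral>\<^sup>+w. C_increment (pivot_rank m s) w \<partial>U_space)
      \<partial>unit_uniform)"
    by (simp add: nn_integral_add nn_integral_cmult U.emeasure_space_1)
  also have "\<dots> \<le> (\<integral>\<^sup>+s. 1 + c * indicator (jump_set m) s \<partial>unit_uniform)"
  proof (rule nn_integral_mono)
    fix s
    have "pivot_rank m s \<le> m" by (simp add: pivot_rank_def)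
    then show "1 + indicator (jump_set m) s * (\<integral>\<^sup>+w. C_increment (pivot_rank m s) w \<partial>U_space)
        \<le> 1 + c * indicator (jump_set m) s"
      using IH[of "pivot_rank m s"] by (cases "s \<in> jump_set m") simp_all
  qed
  also have "\<dots> = 1 + c * emeasure unit_uniform (jump_set m)"
    by (simp add: nn_integral_add nn_integral_cmult_indicator)
  finally show ?thesis .
qed

lemma nn_integral_C_increment_le_2: "(\<integral>\<^sup>+u. C_increment n u \<partial>U_space) \<le> 2"
proof (induction n rule: less_induct)
  case (less n)
  show ?case
  proof (cases n)
    case (Suc m)
    have "(\<integral>\<^sup>+u. C_increment (Suc m) u \<partial>U_space) \<le> 1 + 2 * emeasure unit_uniform (jump_set m)"
      by (rule nn_integral_C_increment_Suc_le) (use less Suc in auto)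
    also have "\<dots> \<le> 1 + 2 * ennreal (1 / 2)"
      using emeasure_jump_set_le by (intro add_left_mono mult_left_mono) auto
    also have "\<dots> = 2"
      using ennreal_mult[of 2 "1/2", symmetric] by simp
    finally show ?thesis using Suc by simp
  qed (simp add: C_increment_def)
qed

theorem lemma2p4:
  fixes p :: nat
  assumes "p \<ge> 1"
  shows "(\<integral>u. \<bar>real (C p u) - real (C (p - 1) u)\<bar> \<partial>U_space) \<le> 2"
proof -
  have integrable: "integrable U_space (C_increment p)"
    using nn_integral_C_increment_le_2[of p]
    by (intro integrableI_nonneg) (auto simp: C_increment_nonneg le_less_trans)
  have "ennreal (\<integral>u. C_increment p u \<partial>U_space) = (\<integral>\<^sup>+u. C_increment p u \<partial>U_space)"
    using integrable by (rule nn_integral_eq_integral[symmetric]) (simp add: C_increment_nonneg)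
  with nn_integral_C_increment_le_2[of p] have "ennreal (\<integral>u. C_increment p u \<partial>U_space) \<le> ennreal 2"
    by simp
  then have "(\<integral>u. C_increment p u \<partial>U_space) \<le> 2"
    by (rule ennreal_le_iff[THEN iffD1, rotated]) simp
  then show ?thesis
    by (simp add: C_increment_def)
qed

end
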